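(* Let $R$ be a commutative ring and $I$ an ideal of $R$ with $I\subseteq J(R)$. Then $R$ is locally stable if and only if $R/I$ is locally stable.
   Context: All rings are commutative with identity; $J(R)$ is the Jacobson radical. A ring $S$ has stable range 1 if whenever $aS+bS=S$ there is $y\in S$ with $a+by$ a unit. $S$ is locally stable if whenever $a,b\in S$ with $aS+bS=S$ there is $y\in S$ such that $S/(a+by)S$ has stable range 1. *)

theory Defs
  imports "HOL-Algebra.Algebra"
begin

text \<open>Jacobson radical of a commutative ring: intersection of all maximal ideals
  (equal to the whole carrier for the zero ring).\<close>
definition jacobson_radical :: "('a, 'b) ring_scheme \<Rightarrow> 'a set" where
  "jacobson_radical R = carrier R \<inter> \<Inter> {M. maximalideal M R}"

definition stable_range_1 :: "('a, 'b) ring_scheme \<Rightarrow> bool" where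
  "stable_range_1 S \<longleftrightarrow>
     (\<forall>a\<in>carrier S. \<forall>b\<in>carrier S.
        {a \<otimes>\<^bsub>S\<^esub> x \<oplus>\<^bsub>S\<^esub> b \<otimes>\<^bsub>S\<^esub> z | x z. x \<in> carrier S \<and> z \<in> carrier S} = carrier S
        \<longrightarrow> (\<exists>y\<in>carrier S. a \<oplus>\<^bsub>S\<^esub> b \<otimes>\<^bsub>S\<^esub> y \<in> Units S))"

definition locally_stable :: "('a, 'b) ring_scheme \<Rightarrow> bool" where
  "locally_stable S \<longleftrightarrow>
     (\<forall>a\<in>carrier S. \<forall>b\<in>carrier S.
        {a \<otimes>\<^bsub>S\<^esub> x \<oplus>\<^bsub>S\<^esub> b \<otimes>\<^bsub>S\<^esub> z | x z. x \<in> carrier S \<and> z \<in> carrier S} = carrier S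
        \<longrightarrow> (\<exists>y\<in>carrier S. stable_range_1 (S Quot (PIdl\<^bsub>S\<^esub> (a \<oplus>\<^bsub>S\<^esub> b \<otimes>\<^bsub>S\<^esub> y)))))"

end

theory Submission
  imports Defs
begin

text \<open>Stable range 1 of a quotient \<open>R/K\<close> and comaximality can both be phrased in \<open>R\<close>
  through elements that are invertible modulo \<open>K\<close>. Since \<open>1 + i\<close> is a unit for
  \<open>i \<in> J(R)\<close>, invertibility modulo \<open>L + I\<close> agrees with invertibility modulo \<open>L\<close> whenever
  \<open>I \<subseteq> J(R)\<close>. With \<open>L = 0\<close> this says that a pair is comaximal in \<open>R/I\<close> iff it lifts to a
  comaximal pair of \<open>R\<close>; with \<open>L = cR\<close> it says that \<open>(R/I)/(c + I)\<close> has stable range 1 iff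
  \<open>R/cR\<close> does. These are the only two ingredients of local stability.\<close>

definition unit_mod :: "('a, 'b) ring_scheme \<Rightarrow> 'a set \<Rightarrow> 'a \<Rightarrow> bool" where
  "unit_mod R K w \<longleftrightarrow> (\<exists>u\<in>carrier R. w \<otimes>\<^bsub>R\<^esub> u \<ominus>\<^bsub>R\<^esub> \<one>\<^bsub>R\<^esub> \<in> K)"

definition stable_range_1_mod :: "('a, 'b) ring_scheme \<Rightarrow> 'a set \<Rightarrow> bool" where
  "stable_range_1_mod R K \<longleftrightarrow> (\<forall>a\<in>carrier R. \<forall>b\<in>carrier R.
     (\<exists>x\<in>carrier R. \<exists>z\<in>carrier R. unit_mod R K (a \<otimes>\<^bsub>R\<^esub> x \<oplus>\<^bsub>R\<^esub> b \<otimes>\<^bsub>R\<^esub> z))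
     \<longrightarrow> (\<exists>y\<in>carrier R. unit_mod R K (a \<oplus>\<^bsub>R\<^esub> b \<otimes>\<^bsub>R\<^esub> y)))"

lemma (in cring) unit_mod_zero_iff:
  assumes "w \<in> carrier R"
  shows "unit_mod R {\<zero>} w \<longleftrightarrow> w \<in> Units R"
  using assms by (auto simp: unit_mod_def Units_def m_comm)

lemma (in cring) comaximal_iff_unit_mod_zero:
  assumes a: "a \<in> carrier R" and b: "b \<in> carrier R"
  shows "{a \<otimes> x \<oplus> b \<otimes> z | x z. x \<in> carrier R \<and> z \<in> carrier R} = carrier R
     \<longleftrightarrow> (\<exists>x\<in>carrier R. \<exists>z\<in>carrier R. unit_mod R {\<zero>} (a \<otimes> x \<oplus> b \<otimes> z))"
    (is "?comb = carrier R \<longleftrightarrow> _")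
proof
  assume "?comb = carrier R"
  then have "\<one> \<in> ?comb" by simp
  then obtain x z where xz: "x \<in> carrier R" "z \<in> carrier R" "a \<otimes> x \<oplus> b \<otimes> z = \<one>"
    unfolding mem_Collect_eq by (elim exE conjE) (rule that, simp_all)
  then show "\<exists>x\<in>carrier R. \<exists>z\<in>carrier R. unit_mod R {\<zero>} (a \<otimes> x \<oplus> b \<otimes> z)"
    unfolding unit_mod_def by (intro bexI[of _ x] bexI[of _ z] bexI[of _ \<one>]) simp_all
next
  assume "\<exists>x\<in>carrier R. \<exists>z\<in>carrier R. unit_mod R {\<zero>} (a \<otimes> x \<oplus> b \<otimes> z)"
  then obtain x z u where xzu: "x \<in> carrier R" "z \<in> carrier R" "u \<in> carrier R"
    and "(a \<otimes> x \<oplus> b \<otimes> z) \<otimes> u \<ominus> \<one> = \<zero>"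
    unfolding unit_mod_def singleton_iff by (elim bexE) (rule that)
  then have one: "(a \<otimes> x \<oplus> b \<otimes> z) \<otimes> u = \<one>"
    using a b by (simp add: r_right_minus_eq)
  show "?comb = carrier R"
  proof (intro equalityI subsetI)
    fix r assume r: "r \<in> carrier R"
    have "r = (a \<otimes> x \<oplus> b \<otimes> z) \<otimes> u \<otimes> r"
      using one r by simp
    also have "\<dots> = a \<otimes> (x \<otimes> u \<otimes> r) \<oplus> b \<otimes> (z \<otimes> u \<otimes> r)"
      using xzu a b r by algebra
    finally show "r \<in> ?comb"
      using xzu r by blast
  qed (use a b in blast)
qed

lemma (in cring) stable_range_1_iff_mod_zero:
  "stable_range_1 R \<longleftrightarrow> stable_range_1_mod R {\<zero>}"
  unfolding stable_range_1_def stable_range_1_mod_def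
  by (simp add: comaximal_iff_unit_mod_zero unit_mod_zero_iff)

lemma (in ring_hom_cring) unit_mod_vimage:
  assumes "\<And>w. w \<in> carrier R \<Longrightarrow> h w \<in> K' \<longleftrightarrow> w \<in> K"
    and "h ` carrier R = carrier S" and "w \<in> carrier R"
  shows "unit_mod S K' (h w) \<longleftrightarrow> unit_mod R K w"
proof -
  have "h w \<otimes>\<^bsub>S\<^esub> h u \<ominus>\<^bsub>S\<^esub> \<one>\<^bsub>S\<^esub> \<in> K' \<longleftrightarrow> w \<otimes> u \<ominus> \<one> \<in> K"
    if "u \<in> carrier R" for u
  proof -
    have "h w \<otimes>\<^bsub>S\<^esub> h u \<ominus>\<^bsub>S\<^esub> \<one>\<^bsub>S\<^esub> = h (w \<otimes> u \<ominus> \<one>)"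
      using that assms(3) by (simp add: a_minus_def)
    then show ?thesis
      using that assms(3) by (simp only:) (rule assms(1), simp)
  qed
  then show ?thesis
    unfolding unit_mod_def assms(2)[symmetric] by blast
qed

lemma (in ring_hom_cring) stable_range_1_mod_vimage:
  assumes "\<And>w. w \<in> carrier R \<Longrightarrow> h w \<in> K' \<longleftrightarrow> w \<in> K"
    and "h ` carrier R = carrier S"
  shows "stable_range_1_mod S K' \<longleftrightarrow> stable_range_1_mod R K"
proof -
  have ball: "(\<forall>s\<in>carrier S. P s) \<longleftrightarrow> (\<forall>r\<in>carrier R. P (h r))"
    and bex: "(\<exists>s\<in>carrier S. P s) \<longleftrightarrow> (\<exists>r\<in>carrier R. P (h r))" for P
    unfolding assms(2)[symmetric] by auto
  have "unit_mod S K' (h a \<otimes>\<^bsub>S\<^esub> h x \<oplus>\<^bsub>S\<^esub> h b \<otimes>\<^bsub>S\<^esub> h z) \<longleftrightarrow> unit_mod R K (a \<otimes> x \<oplus> b \<otimes> z)"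
    if "a \<in> carrier R" "b \<in> carrier R" "x \<in> carrier R" "z \<in> carrier R" for a b x z
    using that unit_mod_vimage[OF assms, of "a \<otimes> x \<oplus> b \<otimes> z"] by simp
  moreover have "unit_mod S K' (h a \<oplus>\<^bsub>S\<^esub> h b \<otimes>\<^bsub>S\<^esub> h y) \<longleftrightarrow> unit_mod R K (a \<oplus> b \<otimes> y)"
    if "a \<in> carrier R" "b \<in> carrier R" "y \<in> carrier R" for a b y
    using that unit_mod_vimage[OF assms, of "a \<oplus> b \<otimes> y"] by simp
  ultimately show ?thesis
    unfolding stable_range_1_mod_def ball bex by (simp cong: ball_cong bex_cong)
qed

lemma (in ideal) rcos_image_carrier: "(+>) I ` carrier R = carrier (R Quot I)"
  unfolding FactRing_def A_RCOSETS_def' by auto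

lemma (in ideal) ball_carrier_Quot_iff:
  "(\<forall>x\<in>carrier (R Quot I). P x) \<longleftrightarrow> (\<forall>r\<in>carrier R. P (I +> r))"
  unfolding rcos_image_carrier[symmetric] by auto

lemma (in ideal) bex_carrier_Quot_iff:
  "(\<exists>x\<in>carrier (R Quot I). P x) \<longleftrightarrow> (\<exists>r\<in>carrier R. P (I +> r))"
  unfolding rcos_image_carrier[symmetric] by auto

lemma (in ideal) rcos_eq_zero_iff:
  assumes "w \<in> carrier R"
  shows "I +> w = \<zero>\<^bsub>R Quot I\<^esub> \<longleftrightarrow> w \<in> I"
  using assms rcos_const_imp_mem a_rcos_const by (auto simp: FactRing_def)

lemma (in ideal) stable_range_1_Quot_iff:
  assumes "cring R"
  shows "stable_range_1 (R Quot I) \<longleftrightarrow> stable_range_1_mod R I"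
proof -
  interpret Q: cring "R Quot I" by (rule quotient_is_cring) fact
  show ?thesis
    unfolding Q.stable_range_1_iff_mod_zero
    by (rule ring_hom_cring.stable_range_1_mod_vimage[OF rcos_ring_hom_cring[OF assms]])
      (simp_all add: rcos_eq_zero_iff rcos_image_carrier)
qed

lemma (in ring) ex_maximalideal_superset:
  assumes "ideal M R" "\<one> \<notin> M"
  obtains N where "maximalideal N R" "M \<subseteq> N"
proof -
  define A where "A = {N. ideal N R \<and> M \<subseteq> N \<and> \<one> \<notin> N}"
  have "\<exists>N\<in>A. \<forall>N'\<in>A. N \<subseteq> N' \<longrightarrow> N' = N"
  proof (rule subset_Zorn_nonempty)
    show "A \<noteq> {}" using assms unfolding A_def by blast
  next
    fix C assume "C \<noteq> {}" and chain: "subset.chain A C"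
    then have "ideal (\<Union>C) R"
      using chain_Union_is_ideal[of C] unfolding pred_on.chain_def A_def by auto
    then show "\<Union>C \<in> A"
      using \<open>C \<noteq> {}\<close> chain unfolding pred_on.chain_def A_def by blast
  qed
  then obtain N where "N \<in> A" and N_max: "\<forall>N'\<in>A. N \<subseteq> N' \<longrightarrow> N' = N" by blast
  then have N: "ideal N R" "M \<subseteq> N" "\<one> \<notin> N" unfolding A_def by auto
  have "maximalideal N R"
  proof (rule maximalidealI[OF N(1)])
    show "carrier R \<noteq> N" using N(3) by auto
  next
    fix J assume J: "ideal J R" "N \<subseteq> J" "J \<subseteq> carrier R"
    show "J = N \<or> J = carrier R"
    proof (cases "\<one> \<in> J")
      case True
      then show ?thesis using ideal.one_imp_carrier[OF J(1)] by simp
    next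
      case False
      then have "J \<in> A" unfolding A_def using J N by auto
      then show ?thesis using N_max J(2) by simp
    qed
  qed
  then show ?thesis using N(2) by (rule that)
qed

lemma (in cring) jacobson_radical_one_add_Units:
  assumes i: "i \<in> jacobson_radical R"
  shows "\<one> \<oplus> i \<in> Units R"
proof (rule ccontr)
  assume not_unit: "\<one> \<oplus> i \<notin> Units R"
  have i_carr: "i \<in> carrier R" using i unfolding jacobson_radical_def by auto
  have "\<one> \<notin> PIdl (\<one> \<oplus> i)"
  proof
    assume "\<one> \<in> PIdl (\<one> \<oplus> i)"
    then obtain x where "x \<in> carrier R" "x \<otimes> (\<one> \<oplus> i) = \<one>"
      unfolding cgenideal_def by (auto intro: that[OF _ sym])
    then have "\<one> \<oplus> i \<in> Units R" using i_carr by (auto simp: Units_def m_comm)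
    with not_unit show False ..
  qed
  then obtain M where M: "maximalideal M R" "PIdl (\<one> \<oplus> i) \<subseteq> M"
    using ex_maximalideal_superset cgenideal_ideal i_carr by blast
  interpret M: maximalideal M R by (fact M(1))
  have "\<one> \<oplus> i \<in> M" using M(2) cgenideal_self i_carr by blast
  moreover have "i \<in> M" using i M(1) unfolding jacobson_radical_def by blast
  ultimately have "(\<one> \<oplus> i) \<ominus> i \<in> M" by (simp add: a_minus_def M.a_closed M.a_inv_closed)
  moreover have "(\<one> \<oplus> i) \<ominus> i = \<one>" using i_carr by algebra
  ultimately show False using M.I_notcarr M.one_imp_carrier by simp
qed

lemma (in cring) unit_mod_set_add_radical_iff:
  assumes L: "ideal L R" and I: "ideal I R" and I_rad: "I \<subseteq> jacobson_radical R"
    and w: "w \<in> carrier R"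
  shows "unit_mod R (L <+> I) w \<longleftrightarrow> unit_mod R L w"
proof
  assume "unit_mod R (L <+> I) w"
  then obtain u l i where u: "u \<in> carrier R" and l: "l \<in> L" and i: "i \<in> I"
    and wu: "w \<otimes> u \<ominus> \<one> = l \<oplus> i"
    unfolding unit_mod_def set_add_def' by blast
  have l_carr: "l \<in> carrier R" and i_carr: "i \<in> carrier R"
    using l i ideal.Icarr[OF L] ideal.Icarr[OF I] by auto
  obtain v where v: "v \<in> carrier R" "(\<one> \<oplus> i) \<otimes> v = \<one>"
    using jacobson_radical_one_add_Units[of i] i I_rad i_carr by (auto simp: Units_def)
  have "w \<otimes> (u \<otimes> v) \<ominus> \<one> = (w \<otimes> u \<ominus> \<one>) \<otimes> v \<ominus> i \<otimes> v \<oplus> ((\<one> \<oplus> i) \<otimes> v \<ominus> \<one>)"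
    using w u v(1) i_carr by algebra
  also have "\<dots> = l \<otimes> v"
    unfolding wu v(2) using l_carr i_carr v(1) by algebra
  finally show "unit_mod R L w"
    unfolding unit_mod_def using u v(1) l ideal.I_r_closed[OF L] by (metis m_closed)
next
  assume "unit_mod R L w"
  moreover have "L \<subseteq> L <+> I"
  proof
    fix l assume "l \<in> L"
    then have "l = l \<oplus> \<zero>" using ideal.Icarr[OF L] by simp
    then show "l \<in> L <+> I"
      using \<open>l \<in> L\<close> additive_subgroup.zero_closed[OF ideal.axioms(1)[OF I]]
      unfolding set_add_def' by blast
  qed
  ultimately show "unit_mod R (L <+> I) w" unfolding unit_mod_def by blast
qed

lemma (in cring) stable_range_1_mod_set_add_radical:
  assumes "ideal L R" "ideal I R" "I \<subseteq> jacobson_radical R"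
  shows "stable_range_1_mod R (L <+> I) \<longleftrightarrow> stable_range_1_mod R L"
  unfolding stable_range_1_mod_def
  by (simp add: unit_mod_set_add_radical_iff[OF assms] cong: ball_cong bex_cong)

lemma (in ideal) rcos_mem_cgenideal_Quot_iff:
  assumes "cring R" and c: "c \<in> carrier R" and w: "w \<in> carrier R"
  shows "I +> w \<in> PIdl\<^bsub>R Quot I\<^esub> (I +> c) \<longleftrightarrow> w \<in> PIdl c <+> I"
proof -
  interpret cring R by fact
  have "I +> w \<in> PIdl\<^bsub>R Quot I\<^esub> (I +> c)
      \<longleftrightarrow> (\<exists>x\<in>carrier (R Quot I). I +> w = x \<otimes>\<^bsub>R Quot I\<^esub> (I +> c))"
    unfolding cgenideal_def by auto
  also have "\<dots> \<longleftrightarrow> (\<exists>r\<in>carrier R. I +> w = I +> (r \<otimes> c))"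
    unfolding bex_carrier_Quot_iff using c by (simp add: ring_hom_mult[OF rcos_ring_hom])
  also have "\<dots> \<longleftrightarrow> (\<exists>r\<in>carrier R. w \<ominus> r \<otimes> c \<in> I)"
    using c w quotient_eq_iff_same_a_r_cos[OF is_ideal] by simp
  also have "\<dots> \<longleftrightarrow> w \<in> PIdl c <+> I"
  proof
    assume "\<exists>r\<in>carrier R. w \<ominus> r \<otimes> c \<in> I"
    then obtain r where r: "r \<in> carrier R" "w \<ominus> r \<otimes> c \<in> I" by blast
    have "w = r \<otimes> c \<oplus> (w \<ominus> r \<otimes> c)" using r(1) c w by algebra
    then show "w \<in> PIdl c <+> I"
      using r unfolding cgenideal_def set_add_def' by blast
  next
    assume "w \<in> PIdl c <+> I"
    then obtain r i where r: "r \<in> carrier R" and i: "i \<in> I" and "w = r \<otimes> c \<oplus> i"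
      unfolding cgenideal_def set_add_def' by blast
    moreover have "r \<otimes> c \<oplus> i \<ominus> r \<otimes> c = i"
      using r c Icarr[OF i] by algebra
    ultimately show "\<exists>r\<in>carrier R. w \<ominus> r \<otimes> c \<in> I"
      using r i by (intro bexI[of _ r]) simp_all
  qed
  finally show ?thesis .
qed

lemma (in ideal) stable_range_1_Quot_cgenideal_Quot_iff:
  assumes "cring R" and I_rad: "I \<subseteq> jacobson_radical R" and c: "c \<in> carrier R"
  shows "stable_range_1 ((R Quot I) Quot PIdl\<^bsub>R Quot I\<^esub> (I +> c))
    \<longleftrightarrow> stable_range_1 (R Quot PIdl c)"
proof -
  interpret cring R by fact
  interpret Q: cring "R Quot I" by (rule quotient_is_cring) fact
  have "I +> c \<in> carrier (R Quot I)" using c rcos_image_carrier by blast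
  then have "stable_range_1 ((R Quot I) Quot PIdl\<^bsub>R Quot I\<^esub> (I +> c))
      \<longleftrightarrow> stable_range_1_mod (R Quot I) (PIdl\<^bsub>R Quot I\<^esub> (I +> c))"
    by (intro ideal.stable_range_1_Quot_iff Q.cgenideal_ideal Q.is_cring)
  also have "\<dots> \<longleftrightarrow> stable_range_1_mod R (PIdl c <+> I)"
    by (rule ring_hom_cring.stable_range_1_mod_vimage[OF rcos_ring_hom_cring[OF is_cring]])
      (simp_all add: rcos_mem_cgenideal_Quot_iff[OF is_cring c] rcos_image_carrier)
  also have "\<dots> \<longleftrightarrow> stable_range_1_mod R (PIdl c)"
    using stable_range_1_mod_set_add_radical cgenideal_ideal[OF c] is_ideal I_rad by blast
  also have "\<dots> \<longleftrightarrow> stable_range_1 (R Quot PIdl c)"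
    using ideal.stable_range_1_Quot_iff[OF cgenideal_ideal[OF c] is_cring] by simp
  finally show ?thesis .
qed

lemma (in ideal) comaximal_Quot_iff:
  assumes "cring R" and I_rad: "I \<subseteq> jacobson_radical R"
    and a: "a \<in> carrier R" and b: "b \<in> carrier R"
  shows "{(I +> a) \<otimes>\<^bsub>R Quot I\<^esub> x \<oplus>\<^bsub>R Quot I\<^esub> (I +> b) \<otimes>\<^bsub>R Quot I\<^esub> z | x z.
            x \<in> carrier (R Quot I) \<and> z \<in> carrier (R Quot I)} = carrier (R Quot I)
    \<longleftrightarrow> {a \<otimes> x \<oplus> b \<otimes> z | x z. x \<in> carrier R \<and> z \<in> carrier R} = carrier R"
proof -
  interpret cring R by fact
  interpret Q: cring "R Quot I" by (rule quotient_is_cring) fact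
  have unit_mod_Quot: "unit_mod (R Quot I) {\<zero>\<^bsub>R Quot I\<^esub>} (I +> w) \<longleftrightarrow> unit_mod R {\<zero>} w"
    if w: "w \<in> carrier R" for w
  proof -
    have "unit_mod (R Quot I) {\<zero>\<^bsub>R Quot I\<^esub>} (I +> w) \<longleftrightarrow> unit_mod R I w"
      by (rule ring_hom_cring.unit_mod_vimage[OF rcos_ring_hom_cring[OF is_cring]])
        (simp_all add: rcos_eq_zero_iff rcos_image_carrier w)
    also have "\<dots> \<longleftrightarrow> unit_mod R {\<zero>} w"
    proof -
      have "{\<zero>} <+> I = I"
        unfolding set_add_def' using Icarr by auto
      then show ?thesis
        using unit_mod_set_add_radical_iff[OF zeroideal is_ideal I_rad w] by simp
    qed
    finally show ?thesis .
  qed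
  have "(I +> a) \<otimes>\<^bsub>R Quot I\<^esub> (I +> x) \<oplus>\<^bsub>R Quot I\<^esub> (I +> b) \<otimes>\<^bsub>R Quot I\<^esub> (I +> z)
      = I +> (a \<otimes> x \<oplus> b \<otimes> z)" if "x \<in> carrier R" "z \<in> carrier R" for x z
    using that a b by (simp add: ring_hom_mult[OF rcos_ring_hom] ring_hom_add[OF rcos_ring_hom])
  moreover have "I +> a \<in> carrier (R Quot I)" "I +> b \<in> carrier (R Quot I)"
    using a b rcos_image_carrier by blast+
  ultimately show ?thesis
    using a b
    by (simp add: Q.comaximal_iff_unit_mod_zero comaximal_iff_unit_mod_zero bex_carrier_Quot_iff
        unit_mod_Quot cong: bex_cong)
qed

theorem proposition2p5:
  fixes R (structure) and I :: "'a set"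
  assumes "cring R" and "ideal I R" and "I \<subseteq> jacobson_radical R"
  shows "locally_stable R \<longleftrightarrow> locally_stable (R Quot I)"
proof -
  interpret cring R by fact
  interpret ideal I R by fact
  have "(I +> a) \<oplus>\<^bsub>R Quot I\<^esub> (I +> b) \<otimes>\<^bsub>R Quot I\<^esub> (I +> y) = I +> (a \<oplus> b \<otimes> y)"
    if "a \<in> carrier R" "b \<in> carrier R" "y \<in> carrier R" for a b y
    using that by (simp add: ring_hom_mult[OF rcos_ring_hom] ring_hom_add[OF rcos_ring_hom])
  then show ?thesis
    unfolding locally_stable_def ball_carrier_Quot_iff bex_carrier_Quot_iff
    using assms(1,3)
    by (simp add: comaximal_Quot_iff stable_range_1_Quot_cgenideal_Quot_iff cong: ball_cong bex_cong)
qed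

end
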